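(* If independent random variables $X_1,X_2,X_3$ are uniformly distributed on intervals of lengths $a_1,a_2,a_3>0$, then $$I(X_1+X_2+X_3)\le 2\Big[\frac1{a_1a_2}+\frac1{a_1a_3}+\frac1{a_2a_3}\Big].$$
   Context: Fisher information: for $X$ with absolutely continuous density $p$, $I(X)=\int_{\{p>0\}}p'^2/p\,dx$, otherwise $+\infty$. *)

theory Defs
  imports "HOL-Probability.Probability"
begin

definition abs_cont_interval :: "(real \<Rightarrow> real) \<Rightarrow> real \<Rightarrow> real \<Rightarrow> bool" where
  "abs_cont_interval f a b \<longleftrightarrow>
     (\<forall>e>0. \<exists>d>0. \<forall>(n::nat) (l::nat \<Rightarrow> real) (r::nat \<Rightarrow> real).
        (\<forall>i<n. a \<le> l i \<and> l i \<le> r i \<and> r i \<le> b) \<and>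
        (\<forall>i<n. \<forall>j<n. i \<noteq> j \<longrightarrow> r i \<le> l j \<or> r j \<le> l i) \<and>
        (\<Sum>i<n. r i - l i) < d
        \<longrightarrow> (\<Sum>i<n. \<bar>f (r i) - f (l i)\<bar>) < e)"

definition abs_cont :: "(real \<Rightarrow> real) \<Rightarrow> bool" where
  "abs_cont f \<longleftrightarrow> (\<forall>a b. abs_cont_interval f a b)"

definition ac_density :: "real measure \<Rightarrow> (real \<Rightarrow> real) \<Rightarrow> bool" where
  "ac_density \<mu> p \<longleftrightarrow> abs_cont p \<and> (\<forall>x. 0 \<le> p x) \<and> \<mu> = density lborel (\<lambda>x. ennreal (p x))"

definition fisher_info :: "real measure \<Rightarrow> ennreal" where
  "fisher_info \<mu> =
     (if \<exists>p. ac_density \<mu> p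
      then (let p = (SOME p. ac_density \<mu> p) in
            \<integral>\<^sup>+ x. indicator {x. 0 < p x} x * ennreal ((deriv p x)\<^sup>2 / p x) \<partial>lborel)
      else \<infinity>)"

end

theory Submission
  imports Defs
begin

(* Let X_i be uniform on [c_i, c_i + a_i].  The density p of X_1 + X_2 + X_3 is an explicit
   piecewise quadratic spline supported on [C, C + a_1 + a_2 + a_3], C = c_1 + c_2 + c_3.
   It is C^1, and its derivative p' has one-sided Lipschitz constant K = 1/(a_1 a_2 a_3),
   i.e. p'(y) - p'(x) <= K (y - x) for x <= y.  For a nonnegative function with this property
   Glaeser's inequality gives p'^2 <= 2 K p, so the integrand p'^2/p of the Fisher information is
   at most 2K on the support, and I <= 2 K (a_1 + a_2 + a_3), which is the claimed bound. *)

section \<open>The spline density\<close>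

definition ramp2 :: "real \<Rightarrow> real" where
  "ramp2 u = (max u 0)\<^sup>2 / 2"

lemma DERIV_ramp2: "DERIV ramp2 u :> max u 0"
proof -
  consider "u > 0" | "u < 0" | "u = 0" by linarith
  then show ?thesis
  proof cases
    case 1
    have "DERIV (\<lambda>u. u\<^sup>2 / 2) u :> u" by (auto intro!: derivative_eq_intros)
    then have "DERIV ramp2 u :> u"
      by (rule has_field_derivative_transform_within_open[where S="{0<..}"])
         (use 1 in \<open>auto simp: ramp2_def\<close>)
    then show ?thesis using 1 by simp
  next
    case 2
    have "DERIV (\<lambda>u. 0) u :> 0" by simp
    then have "DERIV ramp2 u :> 0"
      by (rule has_field_derivative_transform_within_open[where S="{..<0}"])
         (use 2 in \<open>auto simp: ramp2_def\<close>)
    then show ?thesis using 2 by simp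
  next
    case 3
    have "((\<lambda>h. max h 0 / 2) \<longlongrightarrow> max 0 0 / 2) (at (0::real))"
      by (intro tendsto_intros) auto
    moreover have "\<forall>\<^sub>F h in at 0. max h 0 / 2 = (ramp2 (0 + h) - ramp2 0) / h"
      unfolding eventually_at_filter by (auto simp: ramp2_def max_def power2_eq_square)
    ultimately have "((\<lambda>h. (ramp2 (0 + h) - ramp2 0) / h) \<longlongrightarrow> 0) (at (0::real))"
      by (simp add: Lim_transform_eventually)
    then show ?thesis using 3 by (simp add: DERIV_def)
  qed
qed

lemma DERIV_ramp2_chain [derivative_intros]:
  "DERIV g x :> g' \<Longrightarrow> DERIV (\<lambda>x. ramp2 (g x)) x :> max (g x) 0 * g'"
  by (rule DERIV_chain2[OF DERIV_ramp2])

text \<open>The trapezoid: \<open>trapezoid a b (x - c1 - c2) / (a * b)\<close> is the density of the sum of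
  uniform variables on \<open>[c1, c1 + a]\<close> and \<open>[c2, c2 + b]\<close>; \<open>trapezoid_prim\<close> is its antiderivative.\<close>
definition trapezoid :: "real \<Rightarrow> real \<Rightarrow> real \<Rightarrow> real" where
  "trapezoid a b u = max u 0 - max (u - a) 0 - max (u - b) 0 + max (u - a - b) 0"

definition trapezoid_prim :: "real \<Rightarrow> real \<Rightarrow> real \<Rightarrow> real" where
  "trapezoid_prim a b u = ramp2 u - ramp2 (u - a) - ramp2 (u - b) + ramp2 (u - a - b)"

lemma trapezoid_eq_overlap:
  "a > 0 \<Longrightarrow> b > 0 \<Longrightarrow> trapezoid a b u = max 0 (min u b - max (u - a) 0)"
  unfolding trapezoid_def by (smt (verit))

lemma trapezoid_bounds: "a > 0 \<Longrightarrow> b > 0 \<Longrightarrow> 0 \<le> trapezoid a b u \<and> trapezoid a b u \<le> a"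
  unfolding trapezoid_def by (smt (verit))

text \<open>The difference of two shifted trapezoids grows with slope at most 1; this is the
  one-sided Lipschitz property behind Glaeser's inequality.\<close>
lemma trapezoid_diff_slope:
  "a > 0 \<Longrightarrow> b > 0 \<Longrightarrow> d > 0 \<Longrightarrow> x \<le> y \<Longrightarrow>
    (trapezoid a b y - trapezoid a b (y - d)) - (trapezoid a b x - trapezoid a b (x - d)) \<le> y - x"
  unfolding trapezoid_def by (smt (verit))

lemma borel_measurable_trapezoid [measurable]: "trapezoid a b \<in> borel_measurable borel"
  unfolding trapezoid_def by measurable

lemma DERIV_trapezoid_prim: "DERIV (trapezoid_prim a b) u :> trapezoid a b u"
  unfolding trapezoid_prim_def trapezoid_def by (auto intro!: derivative_eq_intros)

lemma trapezoid_has_integral: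
  assumes "lo \<le> hi"
  shows "((\<lambda>y. trapezoid a b (y - k)) has_integral
           (trapezoid_prim a b (hi - k) - trapezoid_prim a b (lo - k))) {lo..hi}"
proof -
  have "((\<lambda>y. trapezoid_prim a b (y - k)) has_real_derivative trapezoid a b (y - k) * 1) (at y)" for y
    by (rule DERIV_chain2[OF DERIV_trapezoid_prim]) (auto intro!: derivative_eq_intros)
  then show ?thesis
    by (intro fundamental_theorem_of_calculus[OF assms])
       (auto simp: has_real_derivative_iff_has_vector_derivative[symmetric]
             intro: has_field_derivative_at_within)
qed

text \<open>The density of the sum of three uniform variables on \<open>[c_i, c_i + a_i]\<close> with
  \<open>C = c_1 + c_2 + c_3\<close>, and its derivative.\<close>
definition dens3 :: "real \<Rightarrow> real \<Rightarrow> real \<Rightarrow> real \<Rightarrow> real \<Rightarrow> real" where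
  "dens3 a1 a2 a3 C x =
     (trapezoid_prim a1 a2 (x - C) - trapezoid_prim a1 a2 (x - C - a3)) / (a1 * a2 * a3)"

definition dens3_deriv :: "real \<Rightarrow> real \<Rightarrow> real \<Rightarrow> real \<Rightarrow> real \<Rightarrow> real" where
  "dens3_deriv a1 a2 a3 C x = (trapezoid a1 a2 (x - C) - trapezoid a1 a2 (x - C - a3)) / (a1 * a2 * a3)"

lemma DERIV_dens3: "DERIV (dens3 a1 a2 a3 C) x :> dens3_deriv a1 a2 a3 C x"
proof -
  have "DERIV (\<lambda>x. trapezoid_prim a1 a2 (x - d)) x :> trapezoid a1 a2 (x - d) * 1" for d
    by (rule DERIV_chain2[OF DERIV_trapezoid_prim]) (auto intro!: derivative_eq_intros)
  from DERIV_cdivide[OF DERIV_diff[OF this[of C] this[of "C + a3"]], of "a1 * a2 * a3"]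
  show ?thesis unfolding dens3_def[abs_def] dens3_deriv_def by (simp add: diff_diff_eq)
qed

lemma dens3_nonneg:
  assumes "a1 > 0" "a2 > 0" "a3 > 0"
  shows "0 \<le> dens3 a1 a2 a3 C x"
proof -
  have "((\<lambda>y. trapezoid a1 a2 (y - 0)) has_integral
      (trapezoid_prim a1 a2 (x - C - 0) - trapezoid_prim a1 a2 (x - C - a3 - 0))) {x - C - a3..x - C}"
    using assms by (intro trapezoid_has_integral) auto
  then have "((\<lambda>y. trapezoid a1 a2 y) has_integral
      (trapezoid_prim a1 a2 (x - C) - trapezoid_prim a1 a2 (x - C - a3))) {x - C - a3..x - C}"
    by simp
  then have "0 \<le> trapezoid_prim a1 a2 (x - C) - trapezoid_prim a1 a2 (x - C - a3)"
    by (rule has_integral_nonneg) (use trapezoid_bounds assms in auto)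
  then show ?thesis unfolding dens3_def using assms by simp
qed

lemma dens3_deriv_slope:
  assumes "a1 > 0" "a2 > 0" "a3 > 0" "x \<le> y"
  shows "dens3_deriv a1 a2 a3 C y - dens3_deriv a1 a2 a3 C x \<le> 1 / (a1 * a2 * a3) * (y - x)"
proof -
  have "(trapezoid a1 a2 (y - C) - trapezoid a1 a2 (y - C - a3))
      - (trapezoid a1 a2 (x - C) - trapezoid a1 a2 (x - C - a3)) \<le> y - x"
    using trapezoid_diff_slope[OF assms(1-3), of "x - C" "y - C"] assms by simp
  then show ?thesis unfolding dens3_deriv_def using assms
    by (simp add: diff_divide_distrib[symmetric] divide_right_mono)
qed

text \<open>A crude bound on the derivative; it gives absolute continuity of the density.\<close>
lemma dens3_deriv_bound:
  assumes "a1 > 0" "a2 > 0" "a3 > 0"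
  shows "\<bar>dens3_deriv a1 a2 a3 C x\<bar> \<le> 1 / (a2 * a3)"
proof -
  have "\<bar>trapezoid a1 a2 (x - C) - trapezoid a1 a2 (x - C - a3)\<bar> \<le> a1"
    using trapezoid_bounds[OF assms(1,2), of "x - C"] trapezoid_bounds[OF assms(1,2), of "x - C - a3"]
    by linarith
  then show ?thesis unfolding dens3_deriv_def using assms by (simp add: abs_div field_simps)
qed

text \<open>Beyond \<open>a1 + a2 + a3\<close> all ramps are in their quadratic regime and cancel.\<close>
lemma trapezoid_prim_diff_far:
  assumes "a1 > 0" "a2 > 0" "a3 > 0" "u > a1 + a2 + a3"
  shows "trapezoid_prim a1 a2 u - trapezoid_prim a1 a2 (u - a3) = 0"
proof -
  have "max u 0 = u" "max (u - a1) 0 = u - a1" "max (u - a2) 0 = u - a2"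
    "max (u - a1 - a2) 0 = u - a1 - a2" "max (u - a3) 0 = u - a3"
    "max (u - a3 - a1) 0 = u - a3 - a1" "max (u - a3 - a2) 0 = u - a3 - a2"
    "max (u - a3 - a1 - a2) 0 = u - a3 - a1 - a2"
    using assms by auto
  then show ?thesis
    unfolding trapezoid_prim_def ramp2_def by (simp add: power2_eq_square field_simps)
qed

lemma dens3_support:
  assumes "a1 > 0" "a2 > 0" "a3 > 0" "0 < dens3 a1 a2 a3 C x"
  shows "x \<in> {C .. C + a1 + a2 + a3}"
proof (rule ccontr)
  assume "x \<notin> {C .. C + a1 + a2 + a3}"
  then consider "x < C" | "x > C + a1 + a2 + a3" by auto
  then have "dens3 a1 a2 a3 C x = 0"
  proof cases
    case 1
    then show ?thesis using assms by (simp add: dens3_def trapezoid_prim_def ramp2_def)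
  next
    case 2
    then show ?thesis
      using trapezoid_prim_diff_far[OF assms(1-3), of "x - C"] by (simp add: dens3_def)
  qed
  then show False using assms by simp
qed

section \<open>A general bound on the Fisher information\<close>

lemma abs_cont_from_deriv:
  fixes f f' :: "real \<Rightarrow> real"
  assumes D: "\<And>x. DERIV f x :> f' x" and B: "\<And>x. \<bar>f' x\<bar> \<le> B"
  shows "abs_cont f"
  unfolding abs_cont_def abs_cont_interval_def
proof (intro allI impI)
  fix a b e :: real assume e: "e > 0"
  have B0: "0 \<le> B" using B[of 0] by linarith
  have lip: "\<bar>f y - f x\<bar> \<le> B * (y - x)" if "x \<le> y" for x y
    using field_differentiable_bound[of UNIV f f' B y x] D B that
    by (auto intro: has_field_derivative_at_within)
  show "\<exists>d>0. \<forall>(n::nat) l r. (\<forall>i<n. a \<le> l i \<and> l i \<le> r i \<and> r i \<le> b) \<and>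
        (\<forall>i<n. \<forall>j<n. i \<noteq> j \<longrightarrow> r i \<le> l j \<or> r j \<le> l i) \<and> (\<Sum>i<n. r i - l i) < d
        \<longrightarrow> (\<Sum>i<n. \<bar>f (r i) - f (l i)\<bar>) < e"
  proof (intro exI[of _ "e / (B + 1)"] conjI allI impI)
    show "0 < e / (B + 1)" using e B0 by simp
    fix n :: nat and l r :: "nat \<Rightarrow> real"
    assume H: "(\<forall>i<n. a \<le> l i \<and> l i \<le> r i \<and> r i \<le> b) \<and>
        (\<forall>i<n. \<forall>j<n. i \<noteq> j \<longrightarrow> r i \<le> l j \<or> r j \<le> l i) \<and> (\<Sum>i<n. r i - l i) < e / (B + 1)"
    have S0: "0 \<le> (\<Sum>i<n. r i - l i)" using H by (intro sum_nonneg) auto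
    have "(\<Sum>i<n. \<bar>f (r i) - f (l i)\<bar>) \<le> (\<Sum>i<n. B * (r i - l i))"
      using H by (intro sum_mono lip) auto
    also have "\<dots> \<le> (B + 1) * (\<Sum>i<n. r i - l i)"
      using S0 by (simp add: sum_distrib_left[symmetric] distrib_right)
    also have "\<dots> < (B + 1) * (e / (B + 1))" using H B0 by (intro mult_strict_left_mono) auto
    also have "\<dots> = e" using B0 by simp
    finally show "(\<Sum>i<n. \<bar>f (r i) - f (l i)\<bar>) < e" .
  qed
qed

text \<open>Absolute continuity on an interval around a point implies continuity there
  (take a single subinterval).\<close>
lemma abs_cont_imp_continuous:
  assumes "abs_cont f"
  shows "continuous_on UNIV f"
  unfolding continuous_on_iff
proof (intro ballI allI impI)
  fix x e :: real assume e: "0 < e"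
  from assms have "abs_cont_interval f (x - 1) (x + 1)" by (simp add: abs_cont_def)
  then obtain d where d: "d > 0" and H: "\<And>(n::nat) l r.
        (\<forall>i<n. x - 1 \<le> l i \<and> l i \<le> r i \<and> r i \<le> x + 1) \<and>
        (\<forall>i<n. \<forall>j<n. i \<noteq> j \<longrightarrow> r i \<le> l j \<or> r j \<le> l i) \<and>
        (\<Sum>i<n. r i - l i) < d
        \<longrightarrow> (\<Sum>i<n. \<bar>f (r i) - f (l i)\<bar>) < e"
    unfolding abs_cont_interval_def using e by blast
  show "\<exists>d>0. \<forall>y\<in>UNIV. dist y x < d \<longrightarrow> dist (f y) (f x) < e"
  proof (intro exI[of _ "min d 1"] conjI ballI impI)
    show "0 < min d 1" using d by simp
    fix y assume "dist y x < min d 1"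
    then have "\<bar>f (max x y) - f (min x y)\<bar> < e"
      using H[of "Suc 0" "\<lambda>_. min x y" "\<lambda>_. max x y"] by (auto simp: dist_real_def)
    then show "dist (f y) (f x) < e"
      by (cases "x \<le> y") (auto simp: dist_real_def max_def min_def abs_minus_commute)
  qed
qed

lemma continuous_AE_eq:
  fixes f g :: "real \<Rightarrow> real"
  assumes "continuous_on UNIV f" "continuous_on UNIV g" "AE x in lborel. f x = g x"
  shows "f x = g x"
proof -
  have "closed {x. f x = g x}" using assms by (intro closed_Collect_eq) auto
  moreover have "AE x in lebesgue. x \<in> {x. f x = g x}"
    using AE_completion[OF assms(3)] by simp
  ultimately show ?thesis using mem_closed_if_AE_lebesgue by blast
qed

text \<open>An absolutely continuous density is unique, so the choice in the definition of the
  Fisher information is determined.\<close>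
lemma ac_density_unique:
  assumes p: "ac_density \<mu> p" and q: "ac_density \<mu> q"
  shows "p = q"
proof
  fix x
  have [measurable]: "p \<in> borel_measurable borel" "q \<in> borel_measurable borel"
    using p q abs_cont_imp_continuous borel_measurable_continuous_onI
    unfolding ac_density_def by blast+
  have "AE x in lborel. ennreal (p x) = ennreal (q x)"
    by (rule sigma_finite_measure.density_unique[OF sigma_finite_lborel])
       (use p q in \<open>auto simp: ac_density_def\<close>)
  then have "AE x in lborel. p x = q x"
    by eventually_elim (use p q in \<open>auto simp: ac_density_def\<close>)
  then show "p x = q x"
    using p q abs_cont_imp_continuous continuous_AE_eq unfolding ac_density_def by blast
qed

lemma fisher_info_ac_density:
  assumes "ac_density \<mu> p"
  shows "fisher_info \<mu> = (\<integral>\<^sup>+ x. indicator {x. 0 < p x} x * ennreal ((deriv p x)\<^sup>2 / p x) \<partial>lborel)"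
proof -
  have "(SOME p. ac_density \<mu> p) = p"
    using assms ac_density_unique someI[of "ac_density \<mu>"] by blast
  then show ?thesis using assms unfolding fisher_info_def by auto
qed

text \<open>Glaeser's inequality: a nonnegative differentiable function whose derivative has
  one-sided Lipschitz constant \<open>K\<close> satisfies \<open>f'\<^sup>2 \<le> 2 K f\<close>.  Indeed
  \<open>0 \<le> f (x + h) \<le> f x + h f' x + K h\<^sup>2 / 2\<close>, and \<open>h = - f' x / K\<close> gives the claim.\<close>
lemma glaeser_inequality:
  fixes f f' :: "real \<Rightarrow> real"
  assumes D: "\<And>x. DERIV f x :> f' x" and nonneg: "\<And>x. 0 \<le> f x" and K: "K > 0"
    and slope: "\<And>x y. x \<le> y \<Longrightarrow> f' y - f' x \<le> K * (y - x)"
  shows "(f' x)\<^sup>2 \<le> 2 * K * f x"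
proof -
  define \<phi> where "\<phi> t = f (x + t) - f x - t * f' x - K * t\<^sup>2 / 2" for t
  have D\<phi>: "DERIV \<phi> t :> f' (x + t) - f' x - K * t" for t
  proof -
    have "((\<lambda>t. f (x + t)) has_real_derivative f' (x + t) * 1) (at t)"
      by (rule DERIV_chain2[OF D]) (auto intro!: derivative_eq_intros)
    then show ?thesis unfolding \<phi>_def by (auto intro!: derivative_eq_intros)
  qed
  have taylor: "\<phi> h \<le> 0" for h
  proof -
    consider "h > 0" | "h < 0" | "h = 0" by linarith
    then show ?thesis
    proof cases
      case 1
      from MVT2[OF 1 D\<phi>] obtain z where z: "0 < z" "z < h"
        "\<phi> h - \<phi> 0 = (h - 0) * (f' (x + z) - f' x - K * z)" by blast
      have "f' (x + z) - f' x \<le> K * z" using slope[of x "x + z"] z by simp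
      then have "(h - 0) * (f' (x + z) - f' x - K * z) \<le> 0" using 1
        by (intro mult_nonneg_nonpos) auto
      then show ?thesis using z by (simp add: \<phi>_def)
    next
      case 2
      from MVT2[OF 2 D\<phi>] obtain z where z: "h < z" "z < 0"
        "\<phi> 0 - \<phi> h = (0 - h) * (f' (x + z) - f' x - K * z)" by blast
      have "f' x - f' (x + z) \<le> K * (- z)" using slope[of "x + z" x] z by simp
      then have "(0 - h) * (f' (x + z) - f' x - K * z) \<ge> 0" using 2
        by (intro mult_nonneg_nonneg) auto
      then show ?thesis using z by (simp add: \<phi>_def)
    qed (simp add: \<phi>_def)
  qed
  define h where "h = - f' x / K"
  have "0 \<le> f (x + h)" by (rule nonneg)
  also have "f (x + h) \<le> f x + h * f' x + K * h\<^sup>2 / 2"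
    using taylor[of h] by (simp add: \<phi>_def)
  also have "\<dots> = f x - (f' x)\<^sup>2 / (2 * K)"
    using K by (simp add: h_def field_simps power2_eq_square)
  finally show ?thesis using K by (simp add: field_simps)
qed

theorem fisher_info_le_semiconcave_density:
  fixes p p' :: "real \<Rightarrow> real"
  assumes \<mu>: "\<mu> = density lborel (\<lambda>x. ennreal (p x))"
    and D: "\<And>x. DERIV p x :> p' x" and B: "\<And>x. \<bar>p' x\<bar> \<le> B"
    and nonneg: "\<And>x. 0 \<le> p x" and K: "K > 0"
    and slope: "\<And>x y. x \<le> y \<Longrightarrow> p' y - p' x \<le> K * (y - x)"
    and support: "\<And>x. 0 < p x \<Longrightarrow> x \<in> {s..t}" and "s \<le> t"
  shows "fisher_info \<mu> \<le> ennreal (2 * K * (t - s))"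
proof -
  have "ac_density \<mu> p"
    unfolding ac_density_def using abs_cont_from_deriv[OF D B] nonneg \<mu> by blast
  then have "fisher_info \<mu> = (\<integral>\<^sup>+ x. indicator {x. 0 < p x} x * ennreal ((deriv p x)\<^sup>2 / p x) \<partial>lborel)"
    by (rule fisher_info_ac_density)
  also have "\<dots> \<le> (\<integral>\<^sup>+ x. ennreal (2 * K) * indicator {s..t} x \<partial>lborel)"
  proof (intro nn_integral_mono)
    fix x
    have "(deriv p x)\<^sup>2 / p x \<le> 2 * K" if "0 < p x"
      using glaeser_inequality[OF D nonneg K slope, of x] DERIV_imp_deriv[OF D] that
      by (simp add: pos_divide_le_eq)
    then show "indicator {x. 0 < p x} x * ennreal ((deriv p x)\<^sup>2 / p x)
        \<le> ennreal (2 * K) * indicator {s..t} x"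
      using support[of x] by (cases "0 < p x") (auto simp: ennreal_leI)
  qed
  also have "\<dots> = ennreal (2 * K) * ennreal (t - s)"
    using \<open>s \<le> t\<close> by (simp add: nn_integral_cmult_indicator)
  also have "\<dots> = ennreal (2 * K * (t - s))"
    using K \<open>s \<le> t\<close> by (simp add: ennreal_mult[symmetric])
  finally show ?thesis .
qed

section \<open>The density of the sum\<close>

lemma (in prob_space) distr_add_indep_density:
  fixes X Y :: "'a \<Rightarrow> real"
  assumes ind: "indep_var borel X borel Y"
    and [measurable]: "X \<in> borel_measurable M" "Y \<in> borel_measurable M"
      "f \<in> borel_measurable borel" "g \<in> borel_measurable borel"
    and X: "distr M lborel X = density lborel f" and Y: "distr M lborel Y = density lborel g"
  shows "distr M lborel (\<lambda>\<omega>. X \<omega> + Y \<omega>) = density lborel (\<lambda>x. \<integral>\<^sup>+y. f (x - y) * g y \<partial>lborel)"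
proof -
  have "finite_measure (density lborel f)" "finite_measure (density lborel g)"
    using prob_space_distr[of X lborel] prob_space_distr[of Y lborel] X Y
    by (auto simp: prob_space_def)
  moreover have "distr M lborel (\<lambda>\<omega>. X \<omega> + Y \<omega>) = convolution (distr M lborel X) (distr M lborel Y)"
    by (rule sum_indep_random_variable_lborel[OF ind]) simp_all
  ultimately show ?thesis using X Y by (simp add: convolution_density)
qed

lemma nn_integral_uniform_convolution:
  fixes g :: "real \<Rightarrow> ennreal"
  assumes "a > 0" and [measurable]: "g \<in> borel_measurable borel"
  shows "(\<integral>\<^sup>+ y. (indicator {c..c + a} (x - y) / ennreal a) * g y \<partial>lborel)
       = ennreal (1 / a) * (\<integral>\<^sup>+ y. g y * indicator {x - c - a..x - c} y \<partial>lborel)"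
proof -
  have "z / ennreal a = ennreal (1 / a) * z" for z
    using assms by (simp add: divide_ennreal_def inverse_ennreal inverse_eq_divide mult.commute)
  then have "(\<integral>\<^sup>+ y. (indicator {c..c + a} (x - y) / ennreal a) * g y \<partial>lborel)
      = (\<integral>\<^sup>+ y. ennreal (1 / a) * (g y * indicator {x - c - a..x - c} y) \<partial>lborel)"
    by (intro nn_integral_cong) (auto split: split_indicator)
  then show ?thesis by (simp add: nn_integral_cmult)
qed

lemma uniform_convolution_uniform:
  assumes a1: "a1 > 0" and a2: "a2 > 0"
  shows "(\<integral>\<^sup>+ y. (indicator {c1..c1 + a1} (x - y) / ennreal a1) *
                 (indicator {c2..c2 + a2} y / ennreal a2) \<partial>lborel)
     = ennreal (trapezoid a1 a2 (x - c1 - c2) / (a1 * a2))"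
proof -
  let ?lo = "max (x - c1 - a1) c2" and ?hi = "min (x - c1) (c2 + a2)"
  have "(\<integral>\<^sup>+ y. (indicator {c1..c1 + a1} (x - y) / ennreal a1) *
                 (indicator {c2..c2 + a2} y / ennreal a2) \<partial>lborel)
      = ennreal (1 / a1) * (\<integral>\<^sup>+ y. indicator {c2..c2 + a2} y / ennreal a2
                                    * indicator {x - c1 - a1..x - c1} y \<partial>lborel)"
    by (rule nn_integral_uniform_convolution[OF a1]) measurable
  also have "\<dots> = ennreal (1 / a1) * (\<integral>\<^sup>+ y. ennreal (1 / a2) * indicator {?lo..?hi} y \<partial>lborel)"
    by (rule arg_cong2[where f="(*)"], rule refl, rule nn_integral_cong)
      (use a2 in \<open>auto simp: divide_ennreal_def inverse_ennreal inverse_eq_divide split: split_indicator\<close>)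
  also have "\<dots> = ennreal (1 / a1) * (ennreal (1 / a2) * ennreal (trapezoid a1 a2 (x - c1 - c2)))"
  proof -
    have "(if ?lo \<le> ?hi then ?hi - ?lo else 0) = trapezoid a1 a2 (x - c1 - c2)"
      using trapezoid_eq_overlap[OF a1 a2, of "x - c1 - c2"] by (smt (verit))
    then show ?thesis by (simp add: nn_integral_cmult_indicator emeasure_lborel_Icc_eq)
  qed
  finally show ?thesis
    using trapezoid_bounds[OF a1 a2, of "x - c1 - c2"] a1 a2
    by (simp add: ennreal_mult[symmetric])
qed

lemma uniform_convolution_trapezoid:
  assumes a1: "a1 > 0" and a2: "a2 > 0" and a3: "a3 > 0"
  shows "(\<integral>\<^sup>+ y. (indicator {c3..c3 + a3} (x - y) / ennreal a3) *
                 ennreal (trapezoid a1 a2 (y - c1 - c2) / (a1 * a2)) \<partial>lborel)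
     = ennreal (dens3 a1 a2 a3 (c1 + c2 + c3) x)"
proof -
  let ?F = "trapezoid_prim a1 a2" and ?C = "c1 + c2 + c3"
  have "((\<lambda>y. trapezoid a1 a2 (y - c1 - c2) / (a1 * a2)) has_integral
      (?F (x - ?C) - ?F (x - ?C - a3)) / (a1 * a2)) {x - c3 - a3..x - c3}"
    (is "(_ has_integral _) ?W")
    using has_integral_divide[OF trapezoid_has_integral[of "x - c3 - a3" "x - c3" a1 a2 "c1 + c2"]]
      a3 by (simp add: diff_diff_eq add_ac)
  from nn_integral_has_integral_lebesgue'[OF _ this]
  have int: "(\<integral>\<^sup>+ y. ennreal (trapezoid a1 a2 (y - c1 - c2) / (a1 * a2)) * indicator ?W y \<partial>lborel)
      = ennreal ((?F (x - ?C) - ?F (x - ?C - a3)) / (a1 * a2))"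
    using trapezoid_bounds[OF a1 a2] a1 a2 by simp
  have "0 \<le> ?F (x - ?C) - ?F (x - ?C - a3)"
    using dens3_nonneg[OF a1 a2 a3, of ?C x] mult_pos_pos[OF mult_pos_pos[OF a1 a2] a3]
    by (auto simp: dens3_def zero_le_divide_iff)
  then show ?thesis
    using a1 a2 a3
    by (simp add: nn_integral_uniform_convolution int dens3_def ennreal_mult[symmetric])
qed

lemma distr_sum3_uniform:
  fixes M :: "'a measure" and X :: "nat \<Rightarrow> 'a \<Rightarrow> real" and a c :: "nat \<Rightarrow> real"
  assumes "prob_space M"
    and ind: "prob_space.indep_vars M (\<lambda>_. borel) X {1, 2, 3}"
    and pos: "\<And>i. i \<in> {1, 2, 3} \<Longrightarrow> 0 < a i"
    and unif: "\<And>i. i \<in> {1, 2, 3} \<Longrightarrow> distr M lborel (X i) = uniform_measure lborel {c i .. c i + a i}"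
  shows "distr M lborel (\<lambda>\<omega>. X 1 \<omega> + X 2 \<omega> + X 3 \<omega>)
       = density lborel (\<lambda>x. ennreal (dens3 (a 1) (a 2) (a 3) (c 1 + c 2 + c 3) x))"
proof -
  interpret P: prob_space M by fact
  have a1: "a 1 > 0" and a2: "a 2 > 0" and a3: "a 3 > 0" using pos by auto
  have meas [measurable]: "X 1 \<in> borel_measurable M" "X 2 \<in> borel_measurable M" "X 3 \<in> borel_measurable M"
    using ind unfolding P.indep_vars_def by auto
  have ind12: "P.indep_var borel (X 1) borel (X 2)"
  proof -
    have "P.indep_vars (\<lambda>_. borel) X (insert 1 {2::nat})"
      using P.indep_vars_subset[OF ind] by auto
    from P.indep_vars_sum[OF _ _ this] show ?thesis by simp
  qed
  have ind3: "P.indep_var borel (X 3) borel (\<lambda>\<omega>. X 1 \<omega> + X 2 \<omega>)"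
  proof -
    have "P.indep_vars (\<lambda>_. borel) X (insert 3 {1, 2::nat})"
      using ind by (simp add: insert_commute)
    from P.indep_vars_sum[OF _ _ this] show ?thesis by simp
  qed
  define u where "u i x = indicator {c i..c i + a i} x / ennreal (a i)" for i x
  have u_meas [measurable]: "u i \<in> borel_measurable borel" for i
    unfolding u_def by measurable
  have U: "distr M lborel (X i) = density lborel (u i)" if "i \<in> {1, 2, 3}" for i
    unfolding u_def using unif[OF that] pos[OF that] by (simp add: uniform_measure_def)
  have D12: "distr M lborel (\<lambda>\<omega>. X 1 \<omega> + X 2 \<omega>)
      = density lborel (\<lambda>x. ennreal (trapezoid (a 1) (a 2) (x - c 1 - c 2) / (a 1 * a 2)))"
    using P.distr_add_indep_density[OF ind12 meas(1,2) u_meas u_meas U U]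
    by (simp only: u_def uniform_convolution_uniform[OF a1 a2]) simp
  have "(\<lambda>\<omega>. X 1 \<omega> + X 2 \<omega> + X 3 \<omega>) = (\<lambda>\<omega>. X 3 \<omega> + (X 1 \<omega> + X 2 \<omega>))"
    by (auto simp: add_ac)
  then show ?thesis
    using P.distr_add_indep_density[OF ind3 meas(3) borel_measurable_add[OF meas(1,2)] u_meas _ U D12]
    by (simp only: u_def uniform_convolution_trapezoid[OF a1 a2 a3]) simp
qed

theorem lemma4p2:
  fixes M :: "'a measure" and X :: "nat \<Rightarrow> 'a \<Rightarrow> real" and a c :: "nat \<Rightarrow> real"
  assumes "prob_space M"
    and "prob_space.indep_vars M (\<lambda>_. borel) X {1, 2, 3}"
    and "\<And>i. i \<in> {1, 2, 3} \<Longrightarrow> 0 < a i"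
    and "\<And>i. i \<in> {1, 2, 3} \<Longrightarrow> distr M lborel (X i) = uniform_measure lborel {c i .. c i + a i}"
  shows "fisher_info (distr M lborel (\<lambda>\<omega>. X 1 \<omega> + X 2 \<omega> + X 3 \<omega>))
           \<le> ennreal (2 * (1 / (a 1 * a 2) + 1 / (a 1 * a 3) + 1 / (a 2 * a 3)))"
proof -
  have a1: "a 1 > 0" and a2: "a 2 > 0" and a3: "a 3 > 0" using assms(3) by auto
  define C where "C = c 1 + c 2 + c 3"
  have "fisher_info (distr M lborel (\<lambda>\<omega>. X 1 \<omega> + X 2 \<omega> + X 3 \<omega>))
      \<le> ennreal (2 * (1 / (a 1 * a 2 * a 3)) * ((C + a 1 + a 2 + a 3) - C))"
    using a1 a2 a3 unfolding C_def
    by (intro fisher_info_le_semiconcave_density[OF distr_sum3_uniform[OF assms]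
          DERIV_dens3 dens3_deriv_bound dens3_nonneg _ dens3_deriv_slope dens3_support]) auto
  also have "2 * (1 / (a 1 * a 2 * a 3)) * ((C + a 1 + a 2 + a 3) - C)
      = 2 * (1 / (a 1 * a 2) + 1 / (a 1 * a 3) + 1 / (a 2 * a 3))"
    using a1 a2 a3 by (simp add: field_simps)
  finally show ?thesis .
qed

end
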